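(* Let $n\ge 1$ and let $G$ be a random threshold graph on $n$ vertices. Then for every integer $k\ge 0$, $$P\big(h(\mathrm{seq}(G))=k\big)=\left(\tfrac12\right)^{n-1}\binom{n-1}{\left\lfloor \frac{n+k}{2}\right\rfloor}.$$
   Context: A threshold graph on $n\ge1$ vertices is built from a base vertex $v_0$ by successively adding $v_1,\dots,v_{n-1}$, each either isolated (adjacent to no earlier vertex) or dominating (adjacent to all earlier vertices); its creation sequence $\mathrm{seq}(G)=s_1\cdots s_{n-1}$ has $s_i=1$ if $v_i$ is dominating and $s_i=0$ otherwise, and each unlabeled threshold graph on $n$ vertices corresponds to exactly one binary string of length $n-1$. A random threshold graph on $n$ vertices is one whose creation sequence is uniformly distributed over all $2^{n-1}$ binary strings of length $n-1$ (equivalently, the graph obtained from $n$ independent uniform weights on $[0,1]$, joining two vertices iff their weights sum to more than $1$). For a binary string $s=s_1\cdots s_m$ and $0\le k\le m$, the $k$-th tail is $s_{m-k+1}\cdots s_m$ (the empty string for $k=0$); $z_k(s)$ and $u_k(s)$ denote the numbers of zeros and ones in the $k$-th tail. Define $h(s)=\max_{0\le k\le m}\{z_k(s)-u_k(s)\}$. *)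

theory Defs
  imports "HOL-Probability.Probability"
begin

text \<open>Binary strings are bool lists; True = 1 (dominating), False = 0 (isolated).\<close>

definition tail :: "nat \<Rightarrow> bool list \<Rightarrow> bool list" where
  "tail k s = drop (length s - k) s"

definition zeros :: "nat \<Rightarrow> bool list \<Rightarrow> nat" where
  "zeros k s = length (filter (\<lambda>b. \<not> b) (tail k s))"

definition ones :: "nat \<Rightarrow> bool list \<Rightarrow> nat" where
  "ones k s = length (filter (\<lambda>b. b) (tail k s))"

definition h :: "bool list \<Rightarrow> int" where
  "h s = Max {int (zeros k s) - int (ones k s) | k. k \<le> length s}"

text \<open>Creation sequences of threshold graphs on n vertices: all binary strings of length n-1.
  A random threshold graph has uniformly distributed creation sequence.\<close>

definition creation_seqs :: "nat \<Rightarrow> bool list set" where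
  "creation_seqs n = {s. length s = n - 1}"

definition random_creation_seq :: "nat \<Rightarrow> bool list pmf" where
  "random_creation_seq n = pmf_of_set (creation_seqs n)"

end

theory Submission
  imports Defs
begin

text \<open>Appending a letter to \<open>s\<close> shifts the excess \<open>z - u\<close> of every nonempty tail by
  \<open>+1\<close> (a 0) or \<open>-1\<close> (a 1) and adds the empty tail, so \<open>h\<close> obeys the Lindley recursion
  \<open>h (s @ [c]) = max 0 (h s \<plusminus> 1)\<close>: it is a simple random walk reflected at 0. Hence the
  number \<open>N m k\<close> of strings of length \<open>m\<close> with \<open>h = k\<close> satisfies
  \<open>N (m+1) (k+1) = N m k + N m (k+2)\<close> and \<open>N (m+1) 0 = N m 0 + N m 1\<close>, which are Pascal's rule
  for \<open>m choose ((m+k+1) div 2)\<close>; at the reflecting barrier this needs the symmetry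
  \<open>m choose (m div 2) = m choose ((m+1) div 2)\<close>.\<close>

definition excess_step :: "bool \<Rightarrow> int" where
  "excess_step c = (if c then -1 else 1)"

definition excess :: "bool list \<Rightarrow> int" where
  "excess s = sum_list (map excess_step s)"

fun max_tail_excess :: "bool list \<Rightarrow> int" where
  "max_tail_excess [] = 0"
| "max_tail_excess (c # s) = max (max_tail_excess s) (excess (c # s))"

lemma excess_eq_zeros_minus_ones:
  "excess s = int (length (filter (\<lambda>b. \<not> b) s)) - int (length (filter (\<lambda>b. b) s))"
  by (induction s) (auto simp: excess_def excess_step_def)

lemma max_tail_excess_nonneg: "max_tail_excess s \<ge> 0"
  by (induction s) auto

lemma max_tail_excess_snoc: "max_tail_excess (s @ [c]) = max 0 (max_tail_excess s + excess_step c)"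
  by (induction s) (auto simp: excess_def)

lemma max_tail_excess_snoc_False: "max_tail_excess (s @ [False]) = max_tail_excess s + 1"
  using max_tail_excess_nonneg[of s] by (simp add: max_tail_excess_snoc excess_step_def)

lemma max_tail_excess_snoc_True: "max_tail_excess (s @ [True]) = max 0 (max_tail_excess s - 1)"
  by (simp add: max_tail_excess_snoc excess_step_def)

lemma tail_Cons: "k \<le> length s \<Longrightarrow> tail k (c # s) = tail k s"
  by (simp add: tail_def Suc_diff_le)

lemma h_eq_max_tail_excess: "h s = max_tail_excess s"
proof -
  have "Max ((\<lambda>k. excess (tail k s)) ` {..length s}) = max_tail_excess s"
  proof (induction s)
    case Nil
    then show ?case by (simp add: tail_def excess_def)
  next
    case (Cons c s)
    have "(\<lambda>k. excess (tail k (c # s))) ` {..length (c # s)}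
        = insert (excess (c # s)) ((\<lambda>k. excess (tail k s)) ` {..length s})"
    proof -
      have "(\<lambda>k. excess (tail k (c # s))) ` {..length s} = (\<lambda>k. excess (tail k s)) ` {..length s}"
        by (rule image_cong) (simp_all add: tail_Cons)
      then show ?thesis by (simp add: atMost_Suc tail_def)
    qed
    then show ?case using Cons by (simp add: max.commute)
  qed
  moreover have "{int (zeros k s) - int (ones k s) | k. k \<le> length s}
      = (\<lambda>k. excess (tail k s)) ` {..length s}"
    by (auto simp: zeros_def ones_def excess_eq_zeros_minus_ones)
  ultimately show ?thesis by (simp add: h_def)
qed

lemma finite_lists_length_with:
  "finite {s :: 'a :: finite list. length s = m \<and> P s}"
  by (rule finite_subset[OF _ finite_lists_length_eq[of UNIV m]]) auto

lemma card_bool_lists_length_Suc: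
  "card {s :: bool list. length s = Suc m \<and> P s}
     = card {s. length s = m \<and> P (s @ [False])} + card {s. length s = m \<and> P (s @ [True])}"
proof -
  let ?A = "{s. length s = m \<and> P (s @ [False])}"
  let ?B = "{s. length s = m \<and> P (s @ [True])}"
  have split: "{s :: bool list. length s = Suc m \<and> P s} = (\<lambda>s. s @ [False]) ` ?A \<union> (\<lambda>s. s @ [True]) ` ?B"
  proof (rule set_eqI, rule iffI)
    fix x assume x: "x \<in> {s :: bool list. length s = Suc m \<and> P s}"
    then have "length x = Suc m" by simp
    then obtain y c where "x = y @ [c]" by (auto simp: length_Suc_conv_rev)
    with x show "x \<in> (\<lambda>s. s @ [False]) ` ?A \<union> (\<lambda>s. s @ [True]) ` ?B"
      by (cases c) auto
  qed auto
  have "card ((\<lambda>s. s @ [False]) ` ?A \<union> (\<lambda>s. s @ [True]) ` ?B)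
      = card ((\<lambda>s. s @ [False]) ` ?A) + card ((\<lambda>s. s @ [True]) ` ?B)"
    by (rule card_Un_disjoint) (auto simp: finite_lists_length_with)
  also have "\<dots> = card ?A + card ?B"
    by (simp add: card_image inj_on_def)
  finally show ?thesis unfolding split .
qed

definition count_max_tail_excess :: "nat \<Rightarrow> nat \<Rightarrow> nat" where
  "count_max_tail_excess m k = card {s :: bool list. length s = m \<and> max_tail_excess s = int k}"

lemma count_max_tail_excess_Suc_0:
  "count_max_tail_excess (Suc m) 0 = count_max_tail_excess m 0 + count_max_tail_excess m 1"
proof -
  have "max_tail_excess (s @ [False]) \<noteq> 0" for s
    using max_tail_excess_nonneg[of s] by (simp add: max_tail_excess_snoc_False)
  moreover have "max_tail_excess (s @ [True]) = 0 \<longleftrightarrow> max_tail_excess s = 0 \<or> max_tail_excess s = 1" for s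
    using max_tail_excess_nonneg[of s] by (auto simp: max_tail_excess_snoc_True)
  ultimately have "count_max_tail_excess (Suc m) 0
      = card ({s. length s = m \<and> max_tail_excess s = 0} \<union> {s. length s = m \<and> max_tail_excess s = 1})"
    unfolding count_max_tail_excess_def
    using card_bool_lists_length_Suc[of m "\<lambda>s. max_tail_excess s = 0"]
    by (simp add: Collect_disj_eq conj_disj_distribL)
  also have "\<dots> = count_max_tail_excess m 0 + count_max_tail_excess m 1"
    by (subst card_Un_disjoint) (auto simp: count_max_tail_excess_def finite_lists_length_with)
  finally show ?thesis .
qed

lemma count_max_tail_excess_Suc_Suc:
  "count_max_tail_excess (Suc m) (Suc k)
     = count_max_tail_excess m k + count_max_tail_excess m (Suc (Suc k))"
proof -
  have "max_tail_excess (s @ [True]) = int (Suc k) \<longleftrightarrow> max_tail_excess s = int (Suc (Suc k))" for s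
    by (auto simp: max_tail_excess_snoc_True)
  then show ?thesis
    unfolding count_max_tail_excess_def
    using card_bool_lists_length_Suc[of m "\<lambda>s. max_tail_excess s = int (Suc k)"]
    by (simp add: max_tail_excess_snoc_False)
qed

lemma binomial_half_symmetric: "m choose (m div 2) = m choose ((m + 1) div 2)"
proof -
  have "m - m div 2 = (m + 1) div 2" by arith
  then show ?thesis using binomial_symmetric[of "m div 2" m] by simp
qed

lemma count_max_tail_excess_eq_binomial:
  "count_max_tail_excess m k = m choose ((m + k + 1) div 2)"
proof (induction m arbitrary: k)
  case 0
  have "{s :: bool list. length s = 0 \<and> max_tail_excess s = int k} = (if k = 0 then {[]} else {})"
    by auto
  then show ?case by (cases k) (auto simp: count_max_tail_excess_def)
next
  case (Suc m)
  note IH = Suc.IH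
  show ?case
  proof (cases k)
    case 0
    have "count_max_tail_excess (Suc m) 0 = (m choose ((m + 1) div 2)) + (m choose ((m + 2) div 2))"
      by (simp add: count_max_tail_excess_Suc_0 IH)
    also have "\<dots> = (m choose (m div 2)) + (m choose Suc (m div 2))"
      using binomial_half_symmetric[of m] by simp
    finally show ?thesis using 0 by simp
  next
    case (Suc j)
    have "(m + j + 3) div 2 = Suc ((m + j + 1) div 2)" by simp
    then show ?thesis
      using Suc by (simp add: count_max_tail_excess_Suc_Suc IH numeral_3_eq_3)
  qed
qed

lemma card_bool_lists_length: "card {s :: bool list. length s = m} = 2 ^ m"
  using card_lists_length_eq[of "UNIV :: bool set" m] by simp

theorem mainTheorem2:
  fixes n k :: nat
  assumes "n \<ge> 1"
  shows "measure_pmf.prob (random_creation_seq n) {s. h s = int k}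
           = (1/2) ^ (n - 1) * real ((n - 1) choose ((n + k) div 2))"
proof -
  let ?m = "n - 1"
  have finite_seqs: "finite (creation_seqs n)"
    using finite_lists_length_with[of ?m "\<lambda>_. True"] by (simp add: creation_seqs_def)
  have "replicate ?m False \<in> creation_seqs n"
    by (simp add: creation_seqs_def)
  then have nonempty: "creation_seqs n \<noteq> {}"
    by blast
  have "creation_seqs n \<inter> {s. h s = int k} = {s. length s = ?m \<and> max_tail_excess s = int k}"
    by (auto simp: creation_seqs_def h_eq_max_tail_excess)
  then have "measure_pmf.prob (random_creation_seq n) {s. h s = int k}
      = real (count_max_tail_excess ?m k) / 2 ^ ?m"
    using finite_seqs nonempty card_bool_lists_length[of ?m]
    by (simp add: random_creation_seq_def measure_pmf_of_set count_max_tail_excess_def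
        creation_seqs_def)
  also have "count_max_tail_excess ?m k = ?m choose ((n + k) div 2)"
    using count_max_tail_excess_eq_binomial assms by simp
  finally show ?thesis by (simp add: field_simps power_one_over)
qed

end
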